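(* Let $x_1,\dots,x_n\in\mathbb{R}^d$, $P_X=\frac1n\sum_i\delta_{x_i}$, and for $S\subseteq\{1,\dots,n\}$ with $|S|=s$ let $S_X=\frac1s\sum_{j\in S}\delta_{x_j}$. Fix $p\ge1$, a radius $\rho\ge0$, a tolerance $\epsilon>0$, and let $B=\{Q:W_p(Q,P_X)\le\rho\}$. Consider the following algorithm. Let $S^{(0)}$ minimize $W_p(P_X,S_X)$ over $|S|=s$, set $\mathcal{Q}^{(0)}=\emptyset$, $t=0$. Repeat: choose $Q^{(t+1)}\in\arg\max_{Q\in B}W_p(Q,S^{(t)}_X)$ and set $\mathrm{UB}^{(t+1)}=W_p(Q^{(t+1)},S^{(t)}_X)$; set $\mathcal{Q}^{(t+1)}=\mathcal{Q}^{(t)}\cup\{Q^{(t+1)}\}$; choose $S^{(t+1)}\in\arg\min_{|S|=s}\max_{Q\in\mathcal{Q}^{(t+1)}}W_p(Q,S_X)$ and set $\mathrm{LB}^{(t+1)}=\max_{Q\in\mathcal{Q}^{(t+1)}}W_p(Q,S^{(t+1)}_X)$; if $\mathrm{UB}^{(t+1)}-\mathrm{LB}^{(t+1)}<\epsilon$ stop and return $S^*=S^{(t+1)}$, otherwise increase $t$ by one. Then the returned solution $S^*$ is $\epsilon$-close to the minimizer of the distributionally robust site selection problem $\min_{|S|=s}\sup_{Q\in B}W_p(Q,S_X)$.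
   Context: $W_p$ is the $p$-Wasserstein distance between distributions on $\mathbb{R}^d$; $\delta_x$ is the Dirac mass at $x$. "$\epsilon$-close to the minimizer" is the paper's phrase; it is to be read as: the optimal value of the robust problem lies within the terminal bracket $[\mathrm{LB},\mathrm{UB}]$ of width less than $\epsilon$, so that $S^*$ is $\epsilon$-optimal. *)

theory Defs
  imports "HOL-Probability.Probability"
begin

definition dists :: "'a::euclidean_space measure set" where
  "dists = {Q. prob_space Q \<and> sets Q = sets borel}"

definition couplings :: "'a::euclidean_space measure \<Rightarrow> 'a measure \<Rightarrow> ('a \<times> 'a) measure set" where
  "couplings M N = {\<pi>. prob_space \<pi> \<and> sets \<pi> = sets (borel \<Otimes>\<^sub>M borel)
      \<and> distr \<pi> borel fst = M \<and> distr \<pi> borel snd = N}"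

definition wasserstein :: "real \<Rightarrow> 'a::euclidean_space measure \<Rightarrow> 'a measure \<Rightarrow> ennreal" where
  "wasserstein p M N =
     (let c = (INF \<pi>\<in>couplings M N. \<integral>\<^sup>+ z. ennreal (dist (fst z) (snd z) powr p) \<partial>\<pi>)
      in if c = \<infinity> then \<infinity> else ennreal (enn2real c powr (1 / p)))"

definition empirical :: "(nat \<Rightarrow> 'a::euclidean_space) \<Rightarrow> nat set \<Rightarrow> 'a measure" where
  "empirical x I = distr (measure_pmf (pmf_of_set I)) borel x"

end

theory Submission
  imports Defs
begin

text \<open>The cutting-plane algorithm brackets the robust optimum by weak duality.
  Every cut Q(k) lies in B, so maximising over the finite family Q(1), ..., Q(T+1)
  instead of B relaxes the inner problem, and the optimal value LB of the relaxed
  problem is a lower bound. Conversely, S(T) is feasible and Q(T+1) is a worst case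
  for it, so UB is the robust objective of a feasible site set and an upper bound.\<close>

lemma Max_image_le_SUP:
  fixes g :: "'b \<Rightarrow> 'a::complete_linorder"
  assumes "finite C" "C \<noteq> {}" "C \<subseteq> B"
  shows "Max (g ` C) \<le> (SUP q\<in>B. g q)"
proof -
  have "Max (g ` C) = (SUP q\<in>C. g q)"
    using assms(1,2) by (simp add: Sup_fin_Max [symmetric] Sup_fin_Sup)
  also have "\<dots> \<le> (SUP q\<in>B. g q)"
    using assms(3) by (rule SUP_subset_mono) simp
  finally show ?thesis .
qed

lemma minimax_lower_bound_by_relaxation:
  fixes f :: "'q \<Rightarrow> 's \<Rightarrow> 'a::complete_linorder"
  assumes "finite C" "C \<noteq> {}" "C \<subseteq> B"
    and "\<forall>S\<in>F. L \<le> Max ((\<lambda>q. f q S) ` C)"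
  shows "L \<le> (INF S\<in>F. SUP q\<in>B. f q S)"
proof (rule INF_greatest)
  fix S assume "S \<in> F"
  then have "L \<le> Max ((\<lambda>q. f q S) ` C)" using assms(4) by blast
  also have "\<dots> \<le> (SUP q\<in>B. f q S)" using assms(1-3) by (rule Max_image_le_SUP)
  finally show "L \<le> (SUP q\<in>B. f q S)" .
qed

lemma minimax_upper_bound_by_feasible_point:
  fixes f :: "'q \<Rightarrow> 's \<Rightarrow> 'a::complete_linorder"
  assumes "S\<^sub>0 \<in> F" and "\<forall>q\<in>B. f q S\<^sub>0 \<le> U"
  shows "(INF S\<in>F. SUP q\<in>B. f q S) \<le> U"
proof -
  have "(INF S\<in>F. SUP q\<in>B. f q S) \<le> (SUP q\<in>B. f q S\<^sub>0)"
    using assms(1) by (rule INF_lower)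
  also have "\<dots> \<le> U" using assms(2) by (blast intro: SUP_least)
  finally show ?thesis .
qed

theorem proposition19:
  fixes x :: "nat \<Rightarrow> 'a::euclidean_space"
    and n s :: nat and p \<rho> \<epsilon> :: real
    and S :: "nat \<Rightarrow> nat set"
    and Q :: "nat \<Rightarrow> 'a measure"
    and T :: nat
  defines "PX \<equiv> empirical x {1..n}"
    and "Feas \<equiv> {S'. S' \<subseteq> {1..n} \<and> card S' = s}"
    and "B \<equiv> {Q'\<in>dists. wasserstein p Q' (empirical x {1..n}) \<le> ennreal \<rho>}"
    and "UB \<equiv> (\<lambda>t::nat. wasserstein p (Q (Suc t)) (empirical x (S t)))"
    and "LB \<equiv> (\<lambda>t::nat. Max ((\<lambda>Q'. wasserstein p Q' (empirical x (S (Suc t)))) ` Q ` {1..Suc t}))"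
  assumes "1 \<le> s" and "s \<le> n"
    and "1 \<le> p" and "0 \<le> \<rho>" and "0 < \<epsilon>"
    \<comment> \<open>initialisation: S^(0) minimises W_p(P_X, S_X)\<close>
    and S0: "S 0 \<in> Feas"
    and S0_min: "\<forall>S'\<in>Feas. wasserstein p PX (empirical x (S 0)) \<le> wasserstein p PX (empirical x S')"
    \<comment> \<open>iteration t (t = 0..T): worst-case distribution for S^(t)\<close>
    and Q_in: "\<forall>t\<le>T. Q (Suc t) \<in> B"
    and Q_max: "\<forall>t\<le>T. \<forall>Q'\<in>B. wasserstein p Q' (empirical x (S t)) \<le> UB t"
    \<comment> \<open>iteration t: S^(t+1) minimises the max over the finite set Q^(t+1)\<close>
    and S_in: "\<forall>t\<le>T. S (Suc t) \<in> Feas"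
    and S_min: "\<forall>t\<le>T. \<forall>S'\<in>Feas. LB t \<le>
                  Max ((\<lambda>Q'. wasserstein p Q' (empirical x S')) ` Q ` {1..Suc t})"
    \<comment> \<open>the algorithm did not stop before iteration T, and stops at iteration T\<close>
    and no_stop: "\<forall>t<T. \<not> (UB t < LB t + ennreal \<epsilon>)"
    and stop: "UB T < LB T + ennreal \<epsilon>"
  shows "LB T \<le> (INF S'\<in>Feas. SUP Q'\<in>B. wasserstein p Q' (empirical x S'))
       \<and> (INF S'\<in>Feas. SUP Q'\<in>B. wasserstein p Q' (empirical x S')) \<le> UB T
       \<and> UB T < LB T + ennreal \<epsilon>"
proof -
  have cuts_feasible: "Q ` {1..Suc T} \<subseteq> B"
  proof
    fix q assume "q \<in> Q ` {1..Suc T}"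
    then obtain k where "q = Q k" "1 \<le> k" "k \<le> Suc T" by auto
    then obtain t where "q = Q (Suc t)" "t \<le> T" by (cases k) auto
    with Q_in show "q \<in> B" by blast
  qed
  have last_feasible: "S T \<in> Feas"
    using S0 S_in by (cases T) auto
  have "LB T \<le> (INF S'\<in>Feas. SUP Q'\<in>B. wasserstein p Q' (empirical x S'))"
  proof (rule minimax_lower_bound_by_relaxation)
    show "finite (Q ` {1..Suc T})" "Q ` {1..Suc T} \<noteq> {}" by simp_all
    show "\<forall>S'\<in>Feas. LB T \<le> Max ((\<lambda>Q'. wasserstein p Q' (empirical x S')) ` Q ` {1..Suc T})"
      using S_min by blast
  qed (rule cuts_feasible)
  moreover have "(INF S'\<in>Feas. SUP Q'\<in>B. wasserstein p Q' (empirical x S')) \<le> UB T"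
    using Q_max by (intro minimax_upper_bound_by_feasible_point [OF last_feasible]) blast
  ultimately show ?thesis using stop by blast
qed

end
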